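(* Let $c>0$ and let $A$ be the integral operator on functions on $[-1,1]$ defined by $$(Af)(y)=\int_{-1}^{1}K(y-x)\,f(x)\,\mathrm{d}x,\qquad -1\le y\le 1,\qquad K(x)=\frac{\sin^2(cx)}{\pi c x^2}.$$ Then: (i) Setting $l=\inf_{x\in[-1,1]}\int_{-1}^{1}K(x-y)\,\mathrm{d}y$, one has $l>0$, and for every nonnegative $f\in L^1(-1,1)$, $$\|Af\|_{L^1(-1,1)}\ \ge\ l\,\|f\|_{L^1(-1,1)} .$$ Consequently $A^{-1}$, restricted to the image under $A$ of the cone of nonnegative functions in $L^1(-1,1)$, is continuous with respect to the $L^1(-1,1)$ norm. (ii) For every $p>1$, the nonnegative functions $$f_n(x)=\left(\frac{np+1}{2}\right)^{1/p}(1-|x|)^n,\qquad x\in[-1,1],\ n=1,2,\dots,$$ satisfy $\|f_n\|_{L^p(-1,1)}=1$ for all $n$, $\sup_{x\in[-1,1]}|f_n(x)|\to\infty$, and $\|Af_n\|_{L^p(-1,1)}\to 0$ as $n\to\infty$. Hence the positivity constraint does not restore continuity of $A^{-1}$ in the $L^p(-1,1)$ norm for any $p>1$.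
   Context: $A$ is the imaging operator for a one-dimensional object of support $[-1,1]$ illuminated by spatially incoherent light and imaged by an aberration-free instrument with rectangular aperture; $c=\pi/R$ with $R$ the Rayleigh resolution distance. Norms are the usual $L^p$ norms on the interval $[-1,1]$. *)

theory Defs
  imports "HOL-Analysis.Analysis"
begin

text \<open>Imaging kernel K(x) = sin(cx)^2 / (pi c x^2), extended continuously by c/pi at x = 0.\<close>
definition imgK :: "real \<Rightarrow> real \<Rightarrow> real" where
  "imgK c x = (if x = 0 then c / pi else (sin (c * x))\<^sup>2 / (pi * c * x\<^sup>2))"

definition imgA :: "real \<Rightarrow> (real \<Rightarrow> real) \<Rightarrow> real \<Rightarrow> real" where
  "imgA c f y = (LINT x:{-1..1}|lborel. imgK c (y - x) * f x)"

definition Lp_norm :: "real \<Rightarrow> (real \<Rightarrow> real) \<Rightarrow> real" where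
  "Lp_norm p g = (LINT x:{-1..1}|lborel. \<bar>g x\<bar> powr p) powr (1 / p)"

definition L1_norm :: "(real \<Rightarrow> real) \<Rightarrow> real" where
  "L1_norm g = (LINT x:{-1..1}|lborel. \<bar>g x\<bar>)"

definition imgl :: "real \<Rightarrow> real" where
  "imgl c = (INF x\<in>{-1..1}. (LINT y:{-1..1}|lborel. imgK c (x - y)))"

definition fseq :: "real \<Rightarrow> nat \<Rightarrow> real \<Rightarrow> real" where
  "fseq p n x = ((real n * p + 1) / 2) powr (1 / p) * (1 - \<bar>x\<bar>) ^ n"

end

theory Submission
  imports Defs "HOL-Real_Asymp.Real_Asymp"
begin

(* (i) K and f are nonnegative, so by Fubini and the symmetry of K,
   ||A f||_1 = int f(x) (int_{-1}^{1} K(x - y) dy) dx >= l ||f||_1.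
   l > 0 because K >= c/(4 pi) on |x| <= 1/c (from |sin t| >= |t|/2 for |t| <= 1), and every
   x in [-1,1] has an interval of length min 1 (1/c) on one side of it inside [-1,1].
   (ii) K <= c/pi gives |A f| <= (c/pi) ||f||_1 pointwise, hence ||A f||_p <= 2^(1/p) (c/pi) ||f||_1.
   The f_n are normalised in L^p and f_n(0) -> infinity, while
   ||f_n||_1 = ((np+1)/2)^(1/p) 2/(n+1) -> 0 precisely because p > 1. *)

lemma set_integrable_Icc_bounded:
  fixes g :: "real \<Rightarrow> real"
  assumes "g \<in> borel_measurable lborel" "\<And>x. x \<in> {a..b} \<Longrightarrow> \<bar>g x\<bar> \<le> B"
  shows "set_integrable lborel {a..b} g"
  unfolding set_integrable_def
  by (rule integrableI_bounded_set_indicator[where B=B]) (use assms in \<open>auto simp: emeasure_lborel_Icc_eq\<close>)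

lemma integrable_bounded_mult:
  fixes g h :: "'a \<Rightarrow> real"
  assumes "g \<in> borel_measurable M" "\<And>x. \<bar>g x\<bar> \<le> B" "integrable M h"
  shows "integrable M (\<lambda>x. g x * h x)"
proof (rule Bochner_Integration.integrable_bound)
  show "integrable M (\<lambda>x. B * h x)" using assms(3) by simp
  show "(\<lambda>x. g x * h x) \<in> borel_measurable M"
    using assms(1) borel_measurable_integrable[OF assms(3)] by measurable
  show "AE x in M. norm (g x * h x) \<le> norm (B * h x)"
  proof (rule AE_I2)
    fix x
    have "\<bar>g x\<bar> * \<bar>h x\<bar> \<le> B * \<bar>h x\<bar>"
      using assms(2) by (rule mult_right_mono) simp
    then show "norm (g x * h x) \<le> norm (B * h x)"
      using abs_ge_zero[of "g x"] assms(2)[of x] by (simp add: abs_mult)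
  qed
qed

lemma (in pair_sigma_finite) integrable_mult_prod:
  fixes f g :: "_ \<Rightarrow> real"
  assumes "integrable M1 f" "integrable M2 g"
  shows "integrable (M1 \<Otimes>\<^sub>M M2) (\<lambda>(x, y). f x * g y)"
proof (rule Fubini_integrable)
  have [measurable]: "f \<in> borel_measurable M1" "g \<in> borel_measurable M2"
    using assms by (simp_all add: borel_measurable_integrable)
  show "(\<lambda>(x, y). f x * g y) \<in> borel_measurable (M1 \<Otimes>\<^sub>M M2)" by measurable
  show "AE x in M1. integrable M2 (\<lambda>y. case (x, y) of (x, y) \<Rightarrow> f x * g y)"
    using assms(2) by simp
  show "integrable M1 (\<lambda>x. \<integral>y. norm (case (x, y) of (x, y) \<Rightarrow> f x * g y) \<partial>M2)"
    using assms(1) by (simp add: abs_mult)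
qed

lemma Lp_norm_le_bound:
  assumes "g \<in> borel_measurable lborel" "p > 0" "\<And>x. x \<in> {-1..1} \<Longrightarrow> \<bar>g x\<bar> \<le> B"
  shows "Lp_norm p g \<le> 2 powr (1 / p) * B"
proof -
  have B: "B \<ge> 0" using assms(3)[of 0] by simp
  have "(LINT x:{-1..1}|lborel. \<bar>g x\<bar> powr p) \<le> (LINT x::real:{-1..1}|lborel. B powr p)"
  proof (rule set_integral_mono)
    show "set_integrable lborel {-1..1} (\<lambda>x. \<bar>g x\<bar> powr p)"
      using assms by (intro set_integrable_Icc_bounded[where B="B powr p"]) (auto intro: powr_mono2)
  qed (use assms in \<open>auto simp: set_integrable_def emeasure_lborel_Icc_eq intro: powr_mono2\<close>)
  then have "(LINT x:{-1..1}|lborel. \<bar>g x\<bar> powr p) \<le> 2 * B powr p"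
    by (simp add: set_lebesgue_integral_def)
  moreover have "(LINT x:{-1..1}|lborel. \<bar>g x\<bar> powr p) \<ge> 0"
    by (simp add: set_lebesgue_integral_def)
  ultimately have "Lp_norm p g \<le> (2 * B powr p) powr (1 / p)"
    unfolding Lp_norm_def using assms(2) by (intro powr_mono2) auto
  also have "\<dots> = 2 powr (1 / p) * B"
    using B assms(2) by (simp add: powr_mult powr_powr)
  finally show ?thesis .
qed

lemma has_integral_one_minus_abs_powr:
  fixes a :: real
  assumes "a > -1"
  shows "((\<lambda>x. (1 - \<bar>x\<bar>) powr a) has_integral 2 / (a + 1)) {-1..1}"
proof -
  have "((\<lambda>t. t powr a) has_integral 1 / (a + 1)) (cbox 0 1)"
    using has_integral_powr_from_0[OF assms, of 1] by simp
  from has_integral_affinity'[OF this, of 1 1]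
  have left: "((\<lambda>x. (1 + x) powr a) has_integral 1 / (a + 1)) {-1..0}"
    by (simp add: add.commute)
  then have right: "((\<lambda>x. (1 - x) powr a) has_integral 1 / (a + 1)) {0..1}"
    using has_integral_reflect_real[of "\<lambda>x. (1 + x) powr a" _ 0 "-1"] by simp
  have "((\<lambda>x. (1 - \<bar>x\<bar>) powr a) has_integral 1 / (a + 1)) {-1..0}"
    by (rule has_integral_eq[OF _ left]) simp
  moreover have "((\<lambda>x. (1 - \<bar>x\<bar>) powr a) has_integral 1 / (a + 1)) {0..1}"
    by (rule has_integral_eq[OF _ right]) simp
  ultimately have "((\<lambda>x. (1 - \<bar>x\<bar>) powr a) has_integral 1 / (a + 1) + 1 / (a + 1)) {-1..1}"
    by (rule has_integral_combine[rotated 2]) simp_all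
  then show ?thesis by simp
qed

lemma imgK_measurable [measurable]: "imgK c \<in> borel_measurable borel"
  unfolding imgK_def[abs_def] by measurable

lemma imgK_nonneg: "c > 0 \<Longrightarrow> imgK c x \<ge> 0"
  by (simp add: imgK_def)

lemma imgK_minus: "imgK c (- x) = imgK c x"
  by (simp add: imgK_def)

lemma imgK_commute: "imgK c (y - x) = imgK c (x - y)"
  using imgK_minus[of c "x - y"] by simp

lemma imgK_le:
  assumes "c > 0" shows "imgK c x \<le> c / pi"
proof (cases "x = 0")
  case False
  have "(sin (c * x))\<^sup>2 \<le> (c * x)\<^sup>2"
    using abs_sin_x_le_abs_x[of "c * x"] by (metis abs_ge_zero power2_abs power_mono)
  then have "(sin (c * x))\<^sup>2 / (pi * c * x\<^sup>2) \<le> (c * x)\<^sup>2 / (pi * c * x\<^sup>2)"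
    using False assms by (intro divide_right_mono) auto
  also have "\<dots> = c / pi" using False assms by (simp add: power2_eq_square field_simps)
  finally show ?thesis using False by (simp add: imgK_def)
qed (simp add: imgK_def)

lemma abs_sin_ge_half_abs:
  fixes t :: real
  assumes "\<bar>t\<bar> \<le> 1"
  shows "\<bar>t\<bar> / 2 \<le> \<bar>sin t\<bar>"
proof -
  have "\<bar>sin t - (\<Sum>m<3. sin_coeff m * t ^ m)\<bar> \<le> inverse (fact 3) * \<bar>t\<bar> ^ 3"
    by (rule Maclaurin_sin_bound)
  then have "\<bar>sin t - t\<bar> \<le> \<bar>t\<bar> ^ 3 / 6"
    by (simp add: sin_coeff_def lessThan_nat_numeral fact_numeral)
  moreover have "\<bar>t\<bar> ^ 3 \<le> \<bar>t\<bar> ^ 1"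
    using assms by (intro power_decreasing) auto
  moreover have "\<bar>t\<bar> - \<bar>sin t\<bar> \<le> \<bar>sin t - t\<bar>"
    by (metis abs_minus_commute abs_triangle_ineq2)
  ultimately show ?thesis
    using abs_ge_zero[of t] unfolding power_one_right by linarith
qed

lemma imgK_ge:
  assumes "c > 0" "\<bar>x\<bar> \<le> 1 / c"
  shows "c / (4 * pi) \<le> imgK c x"
proof (cases "x = 0")
  case True
  then show ?thesis using assms by (simp add: imgK_def divide_left_mono)
next
  case False
  have "\<bar>c * x\<bar> \<le> 1" using assms by (simp add: abs_mult field_simps)
  then have "(\<bar>c * x\<bar> / 2)\<^sup>2 \<le> (sin (c * x))\<^sup>2"
    using abs_sin_ge_half_abs by (metis abs_ge_zero power2_abs power_mono zero_le_divide_iff zero_le_numeral)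
  then have "(\<bar>c * x\<bar> / 2)\<^sup>2 / (pi * c * x\<^sup>2) \<le> (sin (c * x))\<^sup>2 / (pi * c * x\<^sup>2)"
    using False assms by (intro divide_right_mono) auto
  moreover have "(\<bar>c * x\<bar> / 2)\<^sup>2 / (pi * c * x\<^sup>2) = c / (4 * pi)"
    using False assms by (simp add: power2_eq_square field_simps abs_mult)
  ultimately show ?thesis using False by (simp add: imgK_def)
qed

lemma imgA_eq_integral: "imgA c f y = (\<integral>x. imgK c (y - x) * (indicator {-1..1} x * f x) \<partial>lborel)"
  unfolding imgA_def set_lebesgue_integral_def by (intro Bochner_Integration.integral_cong) auto

lemma imgA_measurable:
  assumes "set_integrable lborel {-1..1} f"
  shows "imgA c f \<in> borel_measurable lborel"
proof -
  have [measurable]: "(\<lambda>x. indicator {-1..1} x * f x) \<in> borel_measurable lborel"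
    using assms by (simp add: set_integrable_def borel_measurable_integrable)
  show ?thesis
    unfolding imgA_eq_integral[abs_def] by (rule lborel.borel_measurable_lebesgue_integral) measurable
qed

lemma imgA_nonneg:
  assumes "c > 0" "AE x in lborel. x \<in> {-1..1} \<longrightarrow> f x \<ge> 0"
  shows "imgA c f y \<ge> 0"
  unfolding imgA_eq_integral using assms imgK_nonneg[OF assms(1)]
  by (intro integral_nonneg_AE) (auto simp: indicator_def)

lemma abs_imgA_le:
  assumes "c > 0" "set_integrable lborel {-1..1} f"
  shows "\<bar>imgA c f y\<bar> \<le> c / pi * L1_norm f"
proof -
  have h: "integrable lborel (\<lambda>x. indicator {-1..1} x * f x)"
    using assms(2) by (simp add: set_integrable_def)
  have "\<bar>imgA c f y\<bar> \<le> (\<integral>x. c / pi * \<bar>indicator {-1..1} x * f x\<bar> \<partial>lborel)"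
    unfolding imgA_eq_integral
  proof (rule integral_abs_bound_integral)
    show "integrable lborel (\<lambda>x. imgK c (y - x) * (indicator {-1..1} x * f x))"
      using imgK_le[OF assms(1)] imgK_nonneg[OF assms(1)]
      by (intro integrable_bounded_mult[OF _ _ h, where B="c / pi"]) auto
    fix x
    have "imgK c (y - x) * \<bar>indicator {-1..1} x * f x\<bar> \<le> c / pi * \<bar>indicator {-1..1} x * f x\<bar>"
      using imgK_le[OF assms(1)] by (rule mult_right_mono) simp
    then show "\<bar>imgK c (y - x) * (indicator {-1..1} x * f x)\<bar> \<le> c / pi * \<bar>indicator {-1..1} x * f x\<bar>"
      using imgK_nonneg[OF assms(1), of "y - x"] by (simp add: abs_mult)
  qed (use h in simp)
  also have "\<dots> = c / pi * L1_norm f"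
    unfolding L1_norm_def set_lebesgue_integral_def by (simp add: abs_mult)
  finally show ?thesis .
qed

lemma set_integrable_imgK: "c > 0 \<Longrightarrow> set_integrable lborel {-1..1} (\<lambda>y. imgK c (x - y))"
  by (rule set_integrable_Icc_bounded[where B="c / pi"]) (use imgK_le imgK_nonneg in auto)

lemma set_integral_imgK_nonneg: "c > 0 \<Longrightarrow> (LINT y:{-1..1}|lborel. imgK c (x - y)) \<ge> 0"
  unfolding set_lebesgue_integral_def using imgK_nonneg
  by (intro Bochner_Integration.integral_nonneg) (simp add: indicator_def)

lemma set_integral_imgK_ge:
  assumes "c > 0" "x \<in> {-1..1}"
  shows "c / (4 * pi) * min 1 (1 / c) \<le> (LINT y:{-1..1}|lborel. imgK c (x - y))"
proof -
  define d where "d = min 1 (1 / c)"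
  define J where "J = (if x \<ge> 0 then {x - d..x} else {x..x + d})"
  have d: "0 < d" "d \<le> 1" "d \<le> 1 / c" using assms by (auto simp: d_def)
  have J: "J \<subseteq> {-1..1}" using assms d by (auto simp: J_def)
  have K_on_J: "c / (4 * pi) \<le> imgK c (x - y)" if "y \<in> J" for y
    using imgK_ge[OF assms(1), of "x - y"] that d
    by (cases "x \<ge> 0") (auto simp: J_def abs_if split: if_splits)
  have "c / (4 * pi) * d = (\<integral>y. c / (4 * pi) * indicator J y \<partial>lborel)"
    using d by (simp add: J_def)
  also have "\<dots> \<le> (\<integral>y. indicator {-1..1} y * imgK c (x - y) \<partial>lborel)"
  proof (rule integral_mono)
    show "integrable lborel (\<lambda>y. c / (4 * pi) * indicator J y)"
      by (simp add: J_def emeasure_lborel_Icc_eq)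
    show "integrable lborel (\<lambda>y. indicator {-1..1} y * imgK c (x - y))"
      using set_integrable_imgK[OF assms(1)] by (simp add: set_integrable_def)
    show "c / (4 * pi) * indicator J y \<le> indicator {-1..1} y * imgK c (x - y)" for y
      using K_on_J[of y] J imgK_nonneg[OF assms(1), of "x - y"] by (auto simp: indicator_def)
  qed
  finally show ?thesis by (simp add: set_lebesgue_integral_def d_def)
qed

lemma imgl_pos:
  assumes "c > 0" shows "imgl c > 0"
proof -
  have "c / (4 * pi) * min 1 (1 / c) \<le> imgl c"
    unfolding imgl_def by (rule cINF_greatest) (use set_integral_imgK_ge[OF assms] in auto)
  moreover have "c / (4 * pi) * min 1 (1 / c) > 0" using assms by simp
  ultimately show ?thesis by linarith
qed

lemma imgl_le: "c > 0 \<Longrightarrow> x \<in> {-1..1} \<Longrightarrow> imgl c \<le> (LINT y:{-1..1}|lborel. imgK c (x - y))"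
  unfolding imgl_def by (rule cINF_lower) (auto intro!: bdd_belowI[where m=0] set_integral_imgK_nonneg)

lemma imgK_Fubini:
  assumes c: "c > 0" and h: "integrable lborel h"
  shows "integrable lborel (\<lambda>x. h x * (LINT y:{-1..1}|lborel. imgK c (x - y)))"
    and "(\<integral>x. h x * (LINT y:{-1..1}|lborel. imgK c (x - y)) \<partial>lborel)
           = (LINT y:{-1..1}|lborel. \<integral>x. imgK c (y - x) * h x \<partial>lborel)"
proof -
  define F where "F x y = indicator {-1..1} y * (imgK c (y - x) * h x)" for x y :: real
  have [measurable]: "h \<in> borel_measurable lborel"
    using h by (rule borel_measurable_integrable)
  have "integrable (lborel \<Otimes>\<^sub>M lborel)
      (\<lambda>z. imgK c (snd z - fst z) * (case z of (x, y) \<Rightarrow> h x * indicator {-1..1} y))"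
    using imgK_le[OF c] imgK_nonneg[OF c]
    by (intro integrable_bounded_mult[where B="c / pi"] lborel_pair.integrable_mult_prod h) auto
  then have F: "integrable (lborel \<Otimes>\<^sub>M lborel) (\<lambda>(x, y). F x y)"
    by (simp add: F_def case_prod_beta' mult_ac)
  have F_x: "(\<integral>y. F x y \<partial>lborel) = h x * (LINT y:{-1..1}|lborel. imgK c (x - y))" for x
  proof -
    have "F x y = h x * (indicator {-1..1} y * imgK c (x - y))" for y
      by (simp add: F_def imgK_commute[of c y x])
    then show ?thesis by (simp add: set_lebesgue_integral_def)
  qed
  show "integrable lborel (\<lambda>x. h x * (LINT y:{-1..1}|lborel. imgK c (x - y)))"
    using lborel_pair.integrable_fst'[OF F] by (simp add: F_x)
  have "(\<integral>x. h x * (LINT y:{-1..1}|lborel. imgK c (x - y)) \<partial>lborel)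
      = (\<integral>x. \<integral>y. F x y \<partial>lborel \<partial>lborel)"
    by (simp add: F_x)
  also have "\<dots> = (\<integral>y. \<integral>x. F x y \<partial>lborel \<partial>lborel)"
    using lborel_pair.Fubini_integral[OF F] by simp
  also have "\<dots> = (LINT y:{-1..1}|lborel. \<integral>x. imgK c (y - x) * h x \<partial>lborel)"
    by (simp add: F_def set_lebesgue_integral_def)
  finally show "(\<integral>x. h x * (LINT y:{-1..1}|lborel. imgK c (x - y)) \<partial>lborel)
      = (LINT y:{-1..1}|lborel. \<integral>x. imgK c (y - x) * h x \<partial>lborel)" .
qed

lemma L1_norm_imgA_ge:
  assumes c: "c > 0" and f: "set_integrable lborel {-1..1} f"
    and f_nonneg: "AE x in lborel. x \<in> {-1..1} \<longrightarrow> f x \<ge> 0"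
  shows "imgl c * L1_norm f \<le> L1_norm (imgA c f)"
proof -
  define h where "h x = indicator {-1..1} x * f x" for x :: real
  define G where "G x = (LINT y:{-1..1}|lborel. imgK c (x - y))" for x
  have h: "integrable lborel h"
    using f by (simp add: h_def[abs_def] set_integrable_def)
  have h_nonneg: "AE x in lborel. h x \<ge> 0"
    using f_nonneg by eventually_elim (auto simp: h_def indicator_def)
  have "L1_norm f = (\<integral>x. \<bar>h x\<bar> \<partial>lborel)"
    unfolding L1_norm_def set_lebesgue_integral_def h_def by (simp add: abs_mult)
  also have "\<dots> = (\<integral>x. h x \<partial>lborel)"
    using h by (intro integral_cong_AE) (use h_nonneg in \<open>auto simp: borel_measurable_integrable\<close>)
  finally have "imgl c * L1_norm f = (\<integral>x. h x * imgl c \<partial>lborel)"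
    by simp
  also have "\<dots> \<le> (\<integral>x. h x * G x \<partial>lborel)"
  proof (rule integral_mono_AE)
    show "integrable lborel (\<lambda>x. h x * imgl c)"
      using h by simp
    show "integrable lborel (\<lambda>x. h x * G x)"
      unfolding G_def using c h by (rule imgK_Fubini)
    show "AE x in lborel. h x * imgl c \<le> h x * G x"
      using h_nonneg
    proof eventually_elim
      case (elim x)
      then show ?case
        using imgl_le[OF c, of x] by (cases "x \<in> {-1..1}") (auto simp: h_def G_def mult_left_mono)
    qed
  qed
  also have "\<dots> = (LINT y:{-1..1}|lborel. imgA c f y)"
    unfolding G_def imgK_Fubini(2)[OF c h] by (simp add: h_def imgA_eq_integral)
  also have "\<dots> = L1_norm (imgA c f)"
    unfolding L1_norm_def using imgA_nonneg[OF c f_nonneg] by simp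
  finally show ?thesis .
qed

lemma fseq_measurable [measurable]: "fseq p n \<in> borel_measurable borel"
  unfolding fseq_def[abs_def] by measurable

lemma fseq_nonneg: "x \<in> {-1..1} \<Longrightarrow> fseq p n x \<ge> 0"
  unfolding fseq_def by auto

lemma fseq_le: "x \<in> {-1..1} \<Longrightarrow> fseq p n x \<le> ((real n * p + 1) / 2) powr (1 / p)"
  unfolding fseq_def by (rule mult_left_le) (auto intro: power_le_one)

lemma set_integrable_fseq: "set_integrable lborel {-1..1} (fseq p n)"
  by (rule set_integrable_Icc_bounded[where B="((real n * p + 1) / 2) powr (1 / p)"])
     (use fseq_nonneg fseq_le in auto)

lemma set_integral_fseq_powr:
  assumes "p > 0" "q > 0" "n \<ge> 1"
  shows "(LINT x:{-1..1}|lborel. \<bar>fseq p n x\<bar> powr q)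
    = ((real n * p + 1) / 2) powr (q / p) * (2 / (real n * q + 1))"
proof -
  define C where "C = ((real n * p + 1) / 2) powr (q / p)"
  have eq: "\<bar>fseq p n x\<bar> powr q = C * (1 - \<bar>x\<bar>) powr (real n * q)" if x: "x \<in> {-1..1}" for x
  proof -
    have "1 - \<bar>x\<bar> \<ge> 0" using x by auto
    then have "\<bar>fseq p n x\<bar> = ((real n * p + 1) / 2) powr (1 / p) * (1 - \<bar>x\<bar>) powr real n"
      using fseq_nonneg[OF x] assms by (simp add: fseq_def powr_realpow')
    then show ?thesis
      using x by (simp add: C_def powr_mult powr_powr)
  qed
  have "real n * q \<ge> 0" using assms by simp
  then have "((\<lambda>x. C * (1 - \<bar>x\<bar>) powr (real n * q)) has_integral C * (2 / (real n * q + 1))) {-1..1}"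
    by (intro has_integral_mult_right has_integral_one_minus_abs_powr) simp
  then have "((\<lambda>x. \<bar>fseq p n x\<bar> powr q) has_integral C * (2 / (real n * q + 1))) {-1..1}"
    by (rule has_integral_eq[rotated]) (simp add: eq)
  moreover have "set_integrable lborel {-1..1} (\<lambda>x. \<bar>fseq p n x\<bar> powr q)"
    using fseq_nonneg fseq_le assms
    by (intro set_integrable_Icc_bounded[where B="(((real n * p + 1) / 2) powr (1 / p)) powr q"])
       (auto intro: powr_mono2)
  ultimately show ?thesis
    unfolding C_def using set_borel_integral_eq_integral(2) integral_unique by metis
qed

lemma L1_norm_fseq:
  assumes "p > 0" "n \<ge> 1"
  shows "L1_norm (fseq p n) = ((real n * p + 1) / 2) powr (1 / p) * (2 / (real n + 1))"
  using set_integral_fseq_powr[OF assms(1) _ assms(2), of 1] by (simp add: L1_norm_def)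

lemma Lp_norm_fseq:
  assumes "p > 0" "n \<ge> 1"
  shows "Lp_norm p (fseq p n) = 1"
proof -
  have "real n * p + 1 > 0" using assms by (simp add: add_pos_nonneg)
  then have "(LINT x:{-1..1}|lborel. \<bar>fseq p n x\<bar> powr p) = 1"
    using assms by (simp add: set_integral_fseq_powr)
  then show ?thesis by (simp add: Lp_norm_def)
qed

lemma SUP_fseq_tendsto:
  assumes "p > 0"
  shows "filterlim (\<lambda>n. SUP x\<in>{-1..1}. \<bar>fseq p n x\<bar>) at_top sequentially"
proof (rule filterlim_at_top_mono)
  show "filterlim (\<lambda>n::nat. ((real n * p + 1) / 2) powr (1 / p)) at_top sequentially"
    using assms by real_asymp
  have "((real n * p + 1) / 2) powr (1 / p) \<le> (SUP x\<in>{-1..1}. \<bar>fseq p n x\<bar>)" for n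
  proof -
    have "((real n * p + 1) / 2) powr (1 / p) = \<bar>fseq p n 0\<bar>"
      by (simp add: fseq_def)
    also have "\<dots> \<le> (SUP x\<in>{-1..1}. \<bar>fseq p n x\<bar>)"
      using fseq_nonneg fseq_le
      by (intro cSUP_upper bdd_aboveI2[where M="((real n * p + 1) / 2) powr (1 / p)"]) auto
    finally show ?thesis .
  qed
  then show "\<forall>\<^sub>F n in sequentially. ((real n * p + 1) / 2) powr (1 / p) \<le> (SUP x\<in>{-1..1}. \<bar>fseq p n x\<bar>)"
    by simp
qed

lemma set_integrable_imgA_powr:
  assumes "c > 0" "p \<ge> 0" "set_integrable lborel {-1..1} f"
  shows "set_integrable lborel {-1..1} (\<lambda>y. \<bar>imgA c f y\<bar> powr p)"
  using imgA_measurable[OF assms(3)] abs_imgA_le[OF assms(1,3)] assms(2)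
  by (intro set_integrable_Icc_bounded[where B="(c / pi * L1_norm f) powr p"]) (auto intro: powr_mono2)

lemma Lp_norm_imgA_le:
  assumes "c > 0" "p > 0" "set_integrable lborel {-1..1} f"
  shows "Lp_norm p (imgA c f) \<le> 2 powr (1 / p) * (c / pi * L1_norm f)"
  using imgA_measurable[OF assms(3)] assms(2) abs_imgA_le[OF assms(1,3)] by (rule Lp_norm_le_bound)

lemma Lp_norm_imgA_fseq_tendsto:
  assumes "c > 0" "p > 1"
  shows "(\<lambda>n. Lp_norm p (imgA c (fseq p n))) \<longlonglongrightarrow> 0"
proof -
  define b where "b n = 2 powr (1 / p) * (c / pi * (((real n * p + 1) / 2) powr (1 / p) * (2 / (real n + 1))))"
    for n :: nat
  have p: "p > 0" using assms(2) by simp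
  have "\<forall>\<^sub>F n in sequentially. 0 \<le> Lp_norm p (imgA c (fseq p n))"
    by (simp add: Lp_norm_def)
  moreover have "Lp_norm p (imgA c (fseq p n)) \<le> b n" if "n \<ge> 1" for n
  proof -
    have "Lp_norm p (imgA c (fseq p n)) \<le> 2 powr (1 / p) * (c / pi * L1_norm (fseq p n))"
      using assms(1) p set_integrable_fseq by (rule Lp_norm_imgA_le)
    also have "\<dots> = b n"
      unfolding b_def L1_norm_fseq[OF p that] ..
    finally show ?thesis .
  qed
  then have "\<forall>\<^sub>F n in sequentially. Lp_norm p (imgA c (fseq p n)) \<le> b n"
    by (rule eventually_sequentiallyI)
  moreover have "b \<longlonglongrightarrow> 0"
    unfolding b_def using assms by real_asymp
  ultimately show ?thesis
    by (rule tendsto_sandwich[OF _ _ tendsto_const])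
qed

theorem mainTheorem1:
  fixes c :: real
  assumes "c > 0"
  shows "imgl c > 0
    \<and> (\<forall>f :: real \<Rightarrow> real. set_integrable lborel {-1..1} f
          \<and> (AE x in lborel. x \<in> {-1..1} \<longrightarrow> f x \<ge> 0)
          \<longrightarrow> L1_norm (imgA c f) \<ge> imgl c * L1_norm f)
    \<and> (\<forall>p :: real. p > 1 \<longrightarrow>
          (\<forall>n :: nat. n \<ge> 1 \<longrightarrow> Lp_norm p (fseq p n) = 1)
        \<and> filterlim (\<lambda>n. SUP x\<in>{-1..1}. \<bar>fseq p n x\<bar>) at_top sequentially
        \<and> (\<forall>n :: nat. set_integrable lborel {-1..1} (\<lambda>y. \<bar>imgA c (fseq p n) y\<bar> powr p))
        \<and> ((\<lambda>n. Lp_norm p (imgA c (fseq p n))) \<longlonglongrightarrow> 0))"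
proof (intro conjI allI impI)
  show "imgl c > 0"
    using assms by (rule imgl_pos)
  show "imgl c * L1_norm f \<le> L1_norm (imgA c f)"
    if "set_integrable lborel {-1..1} f \<and> (AE x in lborel. x \<in> {-1..1} \<longrightarrow> f x \<ge> 0)" for f
    using L1_norm_imgA_ge[OF assms] that by blast
  show "Lp_norm p (fseq p n) = 1" if "p > 1" "n \<ge> 1" for p n
    using Lp_norm_fseq that by simp
  show "filterlim (\<lambda>n. SUP x\<in>{-1..1}. \<bar>fseq p n x\<bar>) at_top sequentially" if "p > 1" for p
    using SUP_fseq_tendsto that by simp
  show "set_integrable lborel {-1..1} (\<lambda>y. \<bar>imgA c (fseq p n) y\<bar> powr p)" if "p > 1" for p n
    using set_integrable_imgA_powr[OF assms _ set_integrable_fseq] that by simp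
  show "(\<lambda>n. Lp_norm p (imgA c (fseq p n))) \<longlonglongrightarrow> 0" if "p > 1" for p
    using assms that by (rule Lp_norm_imgA_fseq_tendsto)
qed

end
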